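(* Let $\widehat M \in \mathbb{R}^{d\times d}$ be symmetric. Fix a unit vector $w\in\mathbb{R}^d$, a scalar $a \in\mathbb{R}$ and $\alpha>0$, and define $\tilde w := (I + \alpha a\widehat M)w$, $w^+ := \tilde w/\|\tilde w\|_2$, $q := w^\top\widehat M w$ and $q^+ := (w^+)^\top\widehat M w^+$. If $\alpha |a|\,\|\widehat M\|_2 \le 1/2$, then $q^+ - q$ is either zero or has the same sign as $a$.
   Context: In the paper $\widehat M = \frac1N\sum_s y^{(s)}x^{(s)}x^{(s)\top}$ is the empirical moment matrix; $\|\cdot\|_2$ denotes the operator norm. *)

theory Defs
  imports "HOL-Analysis.Analysis"
begin

end

(* Put u = M w, q = w . u and let v = u - q w be the part of u orthogonal to w. For the
   unnormalized step w~ = w + c u with c = alpha a, expanding both quadratic forms gives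
     w~ . M w~ - q (w~ . w~) = c (2 |v|^2 + c (q |v|^2 + v . M v)),
   and since |q| and |v . M v| / |v|^2 are at most |M|, the cofactor is at least
   (2 - 2 |c| |M|) |v|^2 >= 0. Dividing by |w~|^2 > 0 yields q+ - q with the sign of c.
   Only boundedness and self-adjointness of M enter. *)

theory Submission
  imports Defs
begin

lemma sgn_mult_nonneg:
  fixes c z :: real
  assumes "0 \<le> z"
  shows "c * z = 0 \<or> sgn (c * z) = sgn c"
  using assms by (auto simp: sgn_mult)

lemma abs_inner_apply_le_onorm:
  fixes f :: "'a::real_inner \<Rightarrow> 'a"
  assumes "bounded_linear f"
  shows "\<bar>x \<bullet> f x\<bar> \<le> onorm f * (x \<bullet> x)"
proof -
  have "\<bar>x \<bullet> f x\<bar> \<le> norm x * norm (f x)" by (rule Cauchy_Schwarz_ineq2)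
  also have "\<dots> \<le> norm x * (onorm f * norm x)"
    by (intro mult_left_mono onorm assms) simp
  also have "\<dots> = onorm f * (x \<bullet> x)" by (simp add: dot_square_norm power2_eq_square)
  finally show ?thesis .
qed

lemma inner_apply_div_norm:
  fixes f :: "'a::real_inner \<Rightarrow> 'a"
  assumes "linear f"
  shows "(x /\<^sub>R norm x) \<bullet> f (x /\<^sub>R norm x) = (x \<bullet> f x) / (x \<bullet> x)"
  by (simp add: linear_scale[OF assms] dot_square_norm power2_eq_square divide_inverse)

lemma rayleigh_step_identity:
  fixes f :: "'a::real_inner \<Rightarrow> 'a"
  assumes lin: "linear f" and self_adjoint: "\<And>x y. f x \<bullet> y = x \<bullet> f y" and unit: "w \<bullet> w = 1"
  defines "q \<equiv> w \<bullet> f w"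
  defines "v \<equiv> f w - q *\<^sub>R w"
  shows "(w + c *\<^sub>R f w) \<bullet> f (w + c *\<^sub>R f w) - q * ((w + c *\<^sub>R f w) \<bullet> (w + c *\<^sub>R f w))
         = c * (2 * (v \<bullet> v) + c * (q * (v \<bullet> v) + v \<bullet> f v))"
proof -
  define u where "u = f w"
  have wfu: "w \<bullet> f u = u \<bullet> u" using self_adjoint[of w u] by (simp add: u_def)
  have wu: "w \<bullet> u = q" "u \<bullet> w = q" by (simp_all add: q_def u_def inner_commute)
  have step: "(w + c *\<^sub>R u) \<bullet> f (w + c *\<^sub>R u) - q * ((w + c *\<^sub>R u) \<bullet> (w + c *\<^sub>R u))
        = q + 2 * c * (u \<bullet> u) + c\<^sup>2 * (u \<bullet> f u) - q * (1 + 2 * c * q + c\<^sup>2 * (u \<bullet> u))"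
    using wfu wu unit
    by (simp add: u_def[symmetric] linear_add[OF lin] linear_scale[OF lin] inner_add_left inner_add_right
        algebra_simps power2_eq_square)
  have vv: "v \<bullet> v = u \<bullet> u - q\<^sup>2"
    using wu unit by (simp add: v_def u_def[symmetric] inner_diff_left inner_diff_right power2_eq_square)
  have vfv: "v \<bullet> f v = u \<bullet> f u - 2 * q * (u \<bullet> u) + q ^ 3"
    using wfu wu unit
    by (simp add: v_def u_def[symmetric] linear_diff[OF lin] linear_scale[OF lin]
        inner_diff_left inner_diff_right algebra_simps power3_eq_cube)
  show ?thesis
    unfolding u_def[symmetric] step vv vfv by (simp add: algebra_simps power2_eq_square power3_eq_cube)
qed

lemma rayleigh_step_cofactor_nonneg:
  fixes f :: "'a::real_inner \<Rightarrow> 'a"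
  assumes bl: "bounded_linear f" and unit: "w \<bullet> w = 1" and small: "\<bar>c\<bar> * onorm f \<le> 1 / 2"
  defines "q \<equiv> w \<bullet> f w"
  defines "v \<equiv> f w - q *\<^sub>R w"
  shows "0 \<le> 2 * (v \<bullet> v) + c * (q * (v \<bullet> v) + v \<bullet> f v)"
proof -
  have "\<bar>q\<bar> \<le> onorm f" using abs_inner_apply_le_onorm[OF bl, of w] unit by (simp add: q_def)
  then have "\<bar>q * (v \<bullet> v)\<bar> \<le> onorm f * (v \<bullet> v)" by (simp add: abs_mult mult_right_mono)
  then have cofactor_bound: "\<bar>q * (v \<bullet> v) + v \<bullet> f v\<bar> \<le> 2 * onorm f * (v \<bullet> v)"
    using abs_inner_apply_le_onorm[OF bl, of v] abs_triangle_ineq[of "q * (v \<bullet> v)" "v \<bullet> f v"]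
    by linarith
  have "\<bar>c * (q * (v \<bullet> v) + v \<bullet> f v)\<bar> \<le> 2 * (\<bar>c\<bar> * onorm f) * (v \<bullet> v)"
    using mult_left_mono[OF cofactor_bound abs_ge_zero[of c]] by (simp add: abs_mult mult_ac)
  also have "\<dots> \<le> v \<bullet> v" using mult_right_mono[OF small, of "v \<bullet> v"] by simp
  finally show ?thesis by (simp add: abs_le_iff)
qed

lemma rayleigh_step_nonzero:
  fixes f :: "'a::real_normed_vector \<Rightarrow> 'a"
  assumes bl: "bounded_linear f" and unit: "norm w = 1" and small: "\<bar>c\<bar> * onorm f \<le> 1 / 2"
  shows "w + c *\<^sub>R f w \<noteq> 0"
proof
  assume "w + c *\<^sub>R f w = 0"
  then have "w = - (c *\<^sub>R f w)" by (simp add: eq_neg_iff_add_eq_0)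
  then have "1 = \<bar>c\<bar> * norm (f w)" using unit by (metis norm_minus_cancel norm_scaleR)
  also have "\<dots> \<le> \<bar>c\<bar> * onorm f" using onorm[OF bl, of w] unit by (simp add: mult_left_mono)
  finally show False using small by simp
qed

lemma sgn_rayleigh_quotient_step:
  fixes f :: "'a::real_inner \<Rightarrow> 'a"
  assumes bl: "bounded_linear f" and self_adjoint: "\<And>x y. f x \<bullet> y = x \<bullet> f y"
    and unit: "norm w = 1" and small: "\<bar>c\<bar> * onorm f \<le> 1 / 2"
  defines "wp \<equiv> (w + c *\<^sub>R f w) /\<^sub>R norm (w + c *\<^sub>R f w)"
  shows "wp \<bullet> f wp - w \<bullet> f w = 0 \<or> sgn (wp \<bullet> f wp - w \<bullet> f w) = sgn c"
proof -
  define wt where "wt = w + c *\<^sub>R f w"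
  define q where "q = w \<bullet> f w"
  define v where "v = f w - q *\<^sub>R w"
  define z where "z = 2 * (v \<bullet> v) + c * (q * (v \<bullet> v) + v \<bullet> f v)"
  have ww: "w \<bullet> w = 1" using unit by (simp add: dot_square_norm)
  have pos: "0 < wt \<bullet> wt" using rayleigh_step_nonzero[OF bl unit small] by (simp add: wt_def)
  have "wp \<bullet> f wp - q = (wt \<bullet> f wt - q * (wt \<bullet> wt)) / (wt \<bullet> wt)"
    using pos inner_apply_div_norm[OF bounded_linear.linear[OF bl], of wt]
    by (simp add: wp_def wt_def field_simps)
  also have "\<dots> = c * (z / (wt \<bullet> wt))"
    using rayleigh_step_identity[OF bounded_linear.linear[OF bl] self_adjoint ww, of c]
    by (simp add: wt_def z_def q_def v_def)
  finally show ?thesis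
    using sgn_mult_nonneg pos rayleigh_step_cofactor_nonneg[OF bl ww small]
    by (simp add: q_def z_def v_def)
qed

lemma symmetric_matrix_self_adjoint:
  fixes M :: "real ^ 'n ^ 'n"
  assumes "transpose M = M"
  shows "(M *v x) \<bullet> y = x \<bullet> (M *v y)"
  by (metis assms dot_lmul_matrix vector_transpose_matrix)

theorem lemma6:
  fixes M :: "real ^ 'd ^ 'd" and w :: "real ^ 'd" and a \<alpha> :: real
  assumes symM: "transpose M = M"
    and unit: "norm w = 1"
    and alpha_pos: "\<alpha> > 0"
    and small: "\<alpha> * \<bar>a\<bar> * onorm (\<lambda>x. M *v x) \<le> 1 / 2"
  shows "let wt = (mat 1 + (\<alpha> * a) *\<^sub>R M) *v w;
             wp = wt /\<^sub>R norm wt;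
             q = w \<bullet> (M *v w);
             qp = wp \<bullet> (M *v wp)
         in qp - q = 0 \<or> sgn (qp - q) = sgn a"
proof -
  have "(mat 1 + (\<alpha> * a) *\<^sub>R M) *v w = w + (\<alpha> * a) *\<^sub>R (M *v w)"
    by (simp add: matrix_vector_mult_add_rdistrib matrix_vector_mul_lid scaleR_matrix_vector_assoc)
  moreover have "sgn (\<alpha> * a) = sgn a" using alpha_pos by (simp add: sgn_mult)
  moreover have "\<bar>\<alpha> * a\<bar> * onorm (\<lambda>x. M *v x) \<le> 1 / 2" using small alpha_pos by (simp add: abs_mult)
  ultimately show ?thesis
    using sgn_rayleigh_quotient_step[OF matrix_vector_mul_bounded_linear
        symmetric_matrix_self_adjoint[OF symM] unit, of "\<alpha> * a"]
    by (simp add: Let_def)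
qed

end
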